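(* Let $\mathbf i$ and $\mathbf i'$ be reduced expressions of $w_0$ related by a braid move at positions $k,k+1,k+2$ (i.e. $i_k=i_{k+2}=p$, $i_{k+1}=q$, $i'_k=i'_{k+2}=q$, $i'_{k+1}=p$, $i'_j=i_j$ otherwise, with $p\cdot q=-1$), and assume the standard seed $\mathcal S^{\mathbf i}$ satisfies properties (A), (B), (C). Define $P'_j:=P_{\mathbf s(j)}$ for $j\ne k$, where $\mathbf s$ is the transposition of $k+1$ and $k+2$, and $P'_k:=\tilde P_k/(\beta_{k+1}P_k)$ with $\tilde P_k:=\beta_kP_{\mathrm{in}(k)}$. Then for every $1\le j\le N$, $$P'_jP'_{j_-(\mathbf i')}=\beta'_j\prod_{\substack{l<j<l_+(\mathbf i')\\ i'_l\cdot i'_j=-1}}P'_l,$$ with $P'_0:=1$.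
   Context: $\mathfrak g$ is a complex simple Lie algebra of simply-laced type, vertex set $I=\{1,\dots,n\}$, Cartan entries $i\cdot j$, Weyl group with simple reflections $s_i$, longest element $w_0$, $N=\ell(w_0)$, fundamental weights $\omega_i$. $\overline D:\mathbb C[\mathsf N]\to\mathbb C(\alpha_1,\dots,\alpha_n)$ is the algebra morphism $\overline D(f)=\sum_{\mathbf j}(f,e_{j_1}\cdots e_{j_r})\big(\alpha_{j_1}(\alpha_{j_1}+\alpha_{j_2})\cdots(\alpha_{j_1}+\dots+\alpha_{j_r})\big)^{-1}$ ($\mathbb C[\mathsf N]$ identified with the graded dual of $U(\mathfrak n)$, $e_i$ Chevalley generators, $\alpha_i$ indeterminates). Positive roots are linear forms in the $\alpha_i$; $(\beta;P)$ = multiplicity of $\beta$ in $P$. For a reduced expression $\mathbf i$: $\beta_j=s_{i_1}\cdots s_{i_{j-1}}(\alpha_{i_j})$ (and $\beta'_j$ likewise for $\mathbf i'$); $j_-(\mathbf i)=\max(\{l<j:i_l=i_j\}\cup\{0\})$; $j_+(\mathbf i)=\min(\{l>j:i_l=i_j\}\cup\{N+1\})$; $J_{ex}(\mathbf i)=\{j:j_+\le N\}$; flag minors $x_j=D(s_{i_1}\cdots s_{i_j}\omega_{i_j},\omega_{i_j})$. The quiver $Q^{\mathbf i}$ on $\{1,\dots,N\}$ has an ordinary arrow $u\to v$ iff $i_u\cdot i_v=-1$ and $u<v<u_+<v_+$, and a horizontal arrow $u_+\to u$ for $u\in J_{ex}$; $P_{\mathrm{in}(j)}:=P_{j_+}\prod_{l\in\mathrm{inord}(j)}P_l$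 with $\mathrm{inord}(j)$ the sources of ordinary arrows into $j$. Properties: (A) $\overline D(x_j)=1/P_j$ with $P_j$ a product of positive roots; (B) $P_jP_{j_-}=\beta_j\prod_{l<j<l_+,\,i_l\cdot i_j=-1}P_l$ for all $j$, $P_0=1$; (C) $(\beta_i;P_j)-(\beta_i;P_{j_+})\le1$ for $j\in J_{ex}$, $1\le i\le N$. *)

theory Defs
  imports Complex_Main "HOL-Library.Multiset"
begin

text \<open>Simply-laced Cartan data on the vertex set I = {1..n}. C i j is i.j.
  Elements of the root lattice (linear forms in alpha_1..alpha_n with integer
  coefficients) are coefficient vectors nat => int.\<close>

type_synonym rvec = "nat \<Rightarrow> int"

definition simply_laced_simple :: "nat \<Rightarrow> (nat \<Rightarrow> nat \<Rightarrow> int) \<Rightarrow> bool" where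
  "simply_laced_simple n C \<longleftrightarrow>
     n \<ge> 1 \<and>
     (\<forall>i\<in>{1..n}. C i i = 2) \<and>
     (\<forall>i\<in>{1..n}. \<forall>j\<in>{1..n}. C i j = C j i) \<and>
     (\<forall>i\<in>{1..n}. \<forall>j\<in>{1..n}. i \<noteq> j \<longrightarrow> C i j \<in> {0, -1}) \<and>
     (\<forall>i\<in>{1..n}. \<forall>j\<in>{1..n}.
        (\<lambda>a b. a \<in> {1..n} \<and> b \<in> {1..n} \<and> C a b = -1)\<^sup>*\<^sup>* i j) \<and>
     (\<forall>x :: nat \<Rightarrow> real. (\<exists>i\<in>{1..n}. x i \<noteq> 0) \<longrightarrow>
        (\<Sum>i\<in>{1..n}. \<Sum>j\<in>{1..n}. of_int (C i j) * x i * x j) > 0)"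

definition simple_root :: "nat \<Rightarrow> rvec" where
  "simple_root i = (\<lambda>j. if j = i then 1 else 0)"

definition sref :: "nat \<Rightarrow> (nat \<Rightarrow> nat \<Rightarrow> int) \<Rightarrow> nat \<Rightarrow> rvec \<Rightarrow> rvec" where
  "sref n C i \<gamma> = (\<lambda>j. \<gamma> j - (if j = i then (\<Sum>l\<in>{1..n}. C i l * \<gamma> l) else 0))"

primrec wprod :: "nat \<Rightarrow> (nat \<Rightarrow> nat \<Rightarrow> int) \<Rightarrow> nat list \<Rightarrow> rvec \<Rightarrow> rvec" where
  "wprod n C [] = id"
| "wprod n C (a # w) = sref n C a \<circ> wprod n C w"

definition weyl :: "nat \<Rightarrow> (nat \<Rightarrow> nat \<Rightarrow> int) \<Rightarrow> (rvec \<Rightarrow> rvec) set" where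
  "weyl n C = {wprod n C w | w. w \<in> lists {1..n}}"

definition pos_roots :: "nat \<Rightarrow> (nat \<Rightarrow> nat \<Rightarrow> int) \<Rightarrow> rvec set" where
  "pos_roots n C = {\<gamma>. (\<exists>w\<in>lists {1..n}. \<exists>i\<in>{1..n}. \<gamma> = wprod n C w (simple_root i))
                       \<and> (\<forall>j. \<gamma> j \<ge> 0)}"

definition wlen :: "nat \<Rightarrow> (nat \<Rightarrow> nat \<Rightarrow> int) \<Rightarrow> (rvec \<Rightarrow> rvec) \<Rightarrow> nat" where
  "wlen n C f = (LEAST m. \<exists>w\<in>lists {1..n}. length w = m \<and> wprod n C w = f)"

definition w0 :: "nat \<Rightarrow> (nat \<Rightarrow> nat \<Rightarrow> int) \<Rightarrow> rvec \<Rightarrow> rvec" where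
  "w0 n C = (THE f. f \<in> weyl n C \<and>
                (\<forall>\<gamma>\<in>pos_roots n C. (\<lambda>j. - f \<gamma> j) \<in> pos_roots n C))"

definition reduced_w0 :: "nat \<Rightarrow> (nat \<Rightarrow> nat \<Rightarrow> int) \<Rightarrow> nat list \<Rightarrow> bool" where
  "reduced_w0 n C w \<longleftrightarrow> w \<in> lists {1..n} \<and> wprod n C w = w0 n C
      \<and> length w = wlen n C (w0 n C)"

definition ent :: "nat list \<Rightarrow> nat \<Rightarrow> nat" where
  "ent w j = w ! (j - 1)"

definition jminus :: "nat list \<Rightarrow> nat \<Rightarrow> nat" where
  "jminus w j = Max ({l. 1 \<le> l \<and> l < j \<and> ent w l = ent w j} \<union> {0})"

definition jplus :: "nat list \<Rightarrow> nat \<Rightarrow> nat" where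
  "jplus w j = Min ({l. j < l \<and> l \<le> length w \<and> ent w l = ent w j} \<union> {length w + 1})"

definition Jex :: "nat list \<Rightarrow> nat set" where
  "Jex w = {j. 1 \<le> j \<and> j \<le> length w \<and> jplus w j \<le> length w}"

definition beta :: "nat \<Rightarrow> (nat \<Rightarrow> nat \<Rightarrow> int) \<Rightarrow> nat list \<Rightarrow> nat \<Rightarrow> rvec" where
  "beta n C w j = wprod n C (take (j - 1) w) (simple_root (ent w j))"

text \<open>Sources of ordinary arrows u -> j of the quiver Q^i.\<close>
definition inord :: "(nat \<Rightarrow> nat \<Rightarrow> int) \<Rightarrow> nat list \<Rightarrow> nat \<Rightarrow> nat set" where
  "inord C w j = {u. 1 \<le> u \<and> u \<le> length w \<and> C (ent w u) (ent w j) = -1 \<and>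
                     u < j \<and> j < jplus w u \<and> jplus w u < jplus w j}"

definition bset :: "(nat \<Rightarrow> nat \<Rightarrow> int) \<Rightarrow> nat list \<Rightarrow> nat \<Rightarrow> nat set" where
  "bset C w j = {l. 1 \<le> l \<and> l < j \<and> j < jplus w l \<and> C (ent w l) (ent w j) = -1}"

text \<open>Evaluation of a linear form / of a product of linear forms (given as a multiset
  of its factors) at a point a = (alpha_1, ..., alpha_n) in C^n.\<close>
definition ev :: "nat \<Rightarrow> rvec \<Rightarrow> (nat \<Rightarrow> complex) \<Rightarrow> complex" where
  "ev n \<gamma> a = (\<Sum>i\<in>{1..n}. of_int (\<gamma> i) * a i)"

definition evP :: "nat \<Rightarrow> rvec multiset \<Rightarrow> (nat \<Rightarrow> complex) \<Rightarrow> complex" where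
  "evP n M a = (\<Prod>\<gamma>\<in>#M. ev n \<gamma> a)"

definition generic_pt :: "nat \<Rightarrow> (nat \<Rightarrow> nat \<Rightarrow> int) \<Rightarrow> (nat \<Rightarrow> complex) \<Rightarrow> bool" where
  "generic_pt n C a \<longleftrightarrow> (\<forall>\<gamma>\<in>pos_roots n C. ev n \<gamma> a \<noteq> 0)"

definition braid_move :: "(nat \<Rightarrow> nat \<Rightarrow> int) \<Rightarrow> nat list \<Rightarrow> nat list \<Rightarrow> nat \<Rightarrow> nat \<Rightarrow> nat \<Rightarrow> bool" where
  "braid_move C w w' k p q \<longleftrightarrow>
     length w' = length w \<and> 1 \<le> k \<and> k + 2 \<le> length w \<and> C p q = -1 \<and>
     ent w k = p \<and> ent w (k+1) = q \<and> ent w (k+2) = p \<and>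
     ent w' k = q \<and> ent w' (k+1) = p \<and> ent w' (k+2) = q \<and>
     (\<forall>j\<in>{1..length w}. j \<notin> {k, k+1, k+2} \<longrightarrow> ent w' j = ent w j)"

text \<open>Properties (A) (products of positive roots part), (B), (C) of the seed data P
  (P j = multiset of positive-root factors of P_j).\<close>
definition propA :: "nat \<Rightarrow> (nat \<Rightarrow> nat \<Rightarrow> int) \<Rightarrow> nat list \<Rightarrow> (nat \<Rightarrow> rvec multiset) \<Rightarrow> bool" where
  "propA n C w P \<longleftrightarrow> P 0 = {#} \<and>
     (\<forall>j\<in>{1..length w}. set_mset (P j) \<subseteq> pos_roots n C)"

definition propB :: "nat \<Rightarrow> (nat \<Rightarrow> nat \<Rightarrow> int) \<Rightarrow> nat list \<Rightarrow> (nat \<Rightarrow> rvec multiset) \<Rightarrow> bool" where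
  "propB n C w P \<longleftrightarrow> (\<forall>j\<in>{1..length w}. \<forall>a.
     evP n (P j) a * evP n (P (jminus w j)) a =
     ev n (beta n C w j) a * (\<Prod>l\<in>bset C w j. evP n (P l) a))"

definition propC :: "nat \<Rightarrow> (nat \<Rightarrow> nat \<Rightarrow> int) \<Rightarrow> nat list \<Rightarrow> (nat \<Rightarrow> rvec multiset) \<Rightarrow> bool" where
  "propC n C w P \<longleftrightarrow> (\<forall>j\<in>Jex w. \<forall>i\<in>{1..length w}.
     int (count (P j) (beta n C w i)) - int (count (P (jplus w j)) (beta n C w i)) \<le> 1)"

definition Pin :: "nat \<Rightarrow> (nat \<Rightarrow> nat \<Rightarrow> int) \<Rightarrow> nat list \<Rightarrow> (nat \<Rightarrow> rvec multiset) \<Rightarrow> nat \<Rightarrow> (nat \<Rightarrow> complex) \<Rightarrow> complex" where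
  "Pin n C w P j a = evP n (P (jplus w j)) a * (\<Prod>l\<in>inord C w j. evP n (P l) a)"

definition Pnew :: "nat \<Rightarrow> (nat \<Rightarrow> nat \<Rightarrow> int) \<Rightarrow> nat list \<Rightarrow> (nat \<Rightarrow> rvec multiset) \<Rightarrow> nat \<Rightarrow> nat \<Rightarrow> (nat \<Rightarrow> complex) \<Rightarrow> complex" where
  "Pnew n C w P k j a =
     (if j = 0 then 1
      else if j = k then
        (ev n (beta n C w k) a * Pin n C w P k a) / (ev n (beta n C w (k+1)) a * evP n (P k) a)
      else evP n (P (if j = k+1 then k+2 else if j = k+2 then k+1 else j)) a)"

end

(*
  Let s swap k+1 and k+2. The word i' agrees with i o s except at position k, and from position
  k+2 on the prefixes of i and i' contain the same letters; hence for j outside {k, k+1, k+2} the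
  last occurrences of letters in the prefixes of length j, and with them j_-, the index set of (B)
  and beta_j, are carried into each other by s, so (B) for i' at j is (B) for i at j.
  At the braid positions, (B) for i and for i' only involves P_k, P_{k+1}, P_{k+2}, the factors
  at the last occurrences of p and q before k, and the products over the last occurrences before k
  of the other neighbours of p and of q. Solving the three relations of i for three of these
  quantities turns the three relations of i' into identities in a field (exchange_identities).
*)

theory Submission
  imports Defs "HOL-Combinatorics.Transposition"
begin

lemma ent_append_left: "1 \<le> t \<Longrightarrow> t \<le> length u \<Longrightarrow> ent (u @ z) t = ent u t"
  unfolding ent_def by (auto simp: nth_append)

lemma ent_in_set: "1 \<le> j \<Longrightarrow> j \<le> length w \<Longrightarrow> ent w j \<in> set w"
  unfolding ent_def by simp

definition last_occurrences :: "nat list \<Rightarrow> nat \<Rightarrow> nat set" where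
  "last_occurrences w j = {l. 1 \<le> l \<and> l \<le> j \<and> (\<forall>t. l < t \<and> t \<le> j \<longrightarrow> ent w t \<noteq> ent w l)}"

lemma all_le_Suc_iff:
  "(\<forall>t. l < t \<and> t \<le> Suc j \<longrightarrow> P t) \<longleftrightarrow> (\<forall>t. l < t \<and> t \<le> j \<longrightarrow> P t) \<and> (l < Suc j \<longrightarrow> P (Suc j))"
  by (auto simp: le_Suc_eq)

lemma last_occurrences_Suc:
  "last_occurrences w (Suc j) = insert (Suc j) {l \<in> last_occurrences w j. ent w l \<noteq> ent w (Suc j)}"
  unfolding last_occurrences_def all_le_Suc_iff by (auto simp: le_Suc_eq)

lemma last_occurrences_le: "l \<in> last_occurrences w j \<Longrightarrow> 1 \<le> l \<and> l \<le> j"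
  unfolding last_occurrences_def by simp

lemma finite_last_occurrences [simp]: "finite (last_occurrences w j)"
  by (rule finite_subset[of _ "{..j}"]) (auto dest: last_occurrences_le)

lemma last_occurrences_cong:
  "(\<And>t. 1 \<le> t \<Longrightarrow> t \<le> j \<Longrightarrow> ent w t = ent w' t) \<Longrightarrow> last_occurrences w j = last_occurrences w' j"
  unfolding last_occurrences_def by (intro Collect_cong) (metis less_imp_le le_trans)

lemma jplus_gt_iff:
  assumes "j \<le> length w"
  shows "j < jplus w l \<longleftrightarrow> (\<forall>t. l < t \<and> t \<le> j \<longrightarrow> ent w t \<noteq> ent w l)"
proof -
  have "finite ({t. l < t \<and> t \<le> length w \<and> ent w t = ent w l} \<union> {length w + 1})"
    by (rule finite_subset[of _ "{..length w + 1}"]) auto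
  then show ?thesis
    using assms unfolding jplus_def by auto
qed

lemma jplus_eq_Suc_iff:
  assumes "Suc j \<le> length w" "1 \<le> l"
  shows "jplus w l = Suc j \<longleftrightarrow> l \<in> last_occurrences w j \<and> ent w l = ent w (Suc j)"
proof -
  have "jplus w l = Suc j \<longleftrightarrow> j < jplus w l \<and> \<not> Suc j < jplus w l" by auto
  also have "\<dots> \<longleftrightarrow> l \<in> last_occurrences w j \<and> ent w l = ent w (Suc j)"
    unfolding jplus_gt_iff[OF assms(1)] jplus_gt_iff[OF Suc_leD[OF assms(1)]]
    using assms(2) unfolding last_occurrences_def all_le_Suc_iff by auto
  finally show ?thesis .
qed

lemma bset_last_occurrences:
  assumes "j \<le> length w" "C (ent w j) (ent w j) \<noteq> -1"
  shows "bset C w j = {l \<in> last_occurrences w j. C (ent w l) (ent w j) = -1}"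
  using assms unfolding bset_def last_occurrences_def jplus_gt_iff[OF assms(1)]
  by (auto simp: le_less)

lemma jminus_last_occurrences:
  "{l \<in> last_occurrences w j. ent w l = ent w (Suc j)} =
     (if jminus w (Suc j) = 0 then {} else {jminus w (Suc j)})"
proof -
  define S where "S = {l. 1 \<le> l \<and> l \<le> j \<and> ent w l = ent w (Suc j)}"
  have fin: "finite S" unfolding S_def by (rule finite_subset[of _ "{..j}"]) auto
  have jm: "jminus w (Suc j) = Max (insert 0 S)" unfolding jminus_def S_def less_Suc_eq_le by simp
  have "l \<in> last_occurrences w j \<and> ent w l = ent w (Suc j) \<longleftrightarrow> l \<in> S \<and> (\<forall>t\<in>S. t \<le> l)" for l
  proof -
    have "(\<forall>t. l < t \<and> t \<le> j \<longrightarrow> ent w t \<noteq> ent w l) \<longleftrightarrow> (\<forall>t. 1 \<le> t \<and> t \<le> j \<and> ent w t = ent w l \<longrightarrow> t \<le> l)"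
      if "1 \<le> l" using that by (auto simp: not_le[symmetric]) (metis le_trans nle_le)
    then show ?thesis unfolding S_def last_occurrences_def by auto
  qed
  then have "{l \<in> last_occurrences w j. ent w l = ent w (Suc j)} = {l \<in> S. \<forall>t\<in>S. t \<le> l}"
    by blast
  moreover have "{l \<in> S. \<forall>t\<in>S. t \<le> l} = (if S = {} then {} else {Max S})"
    using fin by (auto intro: Max_eqI[symmetric] Max_in)
  moreover have "S \<noteq> {} \<Longrightarrow> Max (insert 0 S) = Max S \<and> Max S \<noteq> 0"
    using fin Max_in[OF fin] by (fastforce simp: S_def intro!: Max_eqI)
  ultimately show ?thesis unfolding jm by auto
qed

lemma jminus_in_last_occurrences:
  "jminus w (Suc j) \<noteq> 0 \<Longrightarrow> jminus w (Suc j) \<in> {l \<in> last_occurrences w j. ent w l = ent w (Suc j)}"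
  by (simp add: jminus_last_occurrences)

lemma jminus_le: "jminus w (Suc j) \<le> j"
  using jminus_in_last_occurrences[of w j] by (cases "jminus w (Suc j) = 0") (auto dest: last_occurrences_le)

lemma prod_jminus:
  "f 0 = 1 \<Longrightarrow> (\<Prod>l\<in>{l \<in> last_occurrences w j. ent w l = ent w (Suc j)}. f l) = f (jminus w (Suc j))"
  unfolding jminus_last_occurrences by simp

lemma jminus_eqI:
  "{l \<in> last_occurrences w j. ent w l = ent w (Suc j)} = {l \<in> last_occurrences w' j'. ent w' l = ent w' (Suc j')}
   \<Longrightarrow> jminus w (Suc j) = jminus w' (Suc j')"
  unfolding jminus_last_occurrences by (cases "jminus w (Suc j) = 0"; cases "jminus w' (Suc j') = 0") simp_all

lemma wprod_append: "wprod n C (xs @ ys) = wprod n C xs \<circ> wprod n C ys"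
  by (induction xs) auto

definition coroot_pairing :: "nat \<Rightarrow> (nat \<Rightarrow> nat \<Rightarrow> int) \<Rightarrow> nat \<Rightarrow> rvec \<Rightarrow> int" where
  "coroot_pairing n C i \<gamma> = (\<Sum>l\<in>{1..n}. C i l * \<gamma> l)"

lemma sref_coroot_pairing:
  "sref n C i \<gamma> = (\<lambda>j. \<gamma> j - (if j = i then coroot_pairing n C i \<gamma> else 0))"
  unfolding sref_def coroot_pairing_def by simp

lemma coroot_pairing_shift:
  assumes "a \<in> {1..n}"
  shows "coroot_pairing n C i (\<lambda>j. \<gamma> j - (if j = a then x else 0)) = coroot_pairing n C i \<gamma> - C i a * x"
proof -
  have "(\<Sum>l\<in>{1..n}. C i l * (if l = a then x else 0)) = C i a * x"
    using assms by (simp add: if_distrib[of "(*) _"] cong: if_cong)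
  then show ?thesis
    unfolding coroot_pairing_def by (simp add: right_diff_distrib sum_subtractf)
qed

lemma coroot_pairing_simple_root: "a \<in> {1..n} \<Longrightarrow> coroot_pairing n C i (simple_root a) = C i a"
  unfolding coroot_pairing_def simple_root_def by (simp add: if_distrib[of "(*) _"] cong: if_cong)

context
  fixes n :: nat and C :: "nat \<Rightarrow> nat \<Rightarrow> int" and p q :: nat
  assumes letters: "p \<in> {1..n}" "q \<in> {1..n}"
    and cartan: "C p p = 2" "C q q = 2" "C p q = -1" "C q p = -1"
begin

lemma sref_sref_sref:
  "sref n C p (sref n C q (sref n C p \<gamma>)) =
     (\<lambda>j. \<gamma> j - (if j = p then coroot_pairing n C p \<gamma> + coroot_pairing n C q \<gamma> else 0)
             - (if j = q then coroot_pairing n C p \<gamma> + coroot_pairing n C q \<gamma> else 0))"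
proof -
  define x y where "x = coroot_pairing n C p \<gamma>" and "y = coroot_pairing n C q \<gamma>"
  define \<gamma>1 where "\<gamma>1 = (\<lambda>j. \<gamma> j - (if j = p then x else 0))"
  define \<gamma>2 where "\<gamma>2 = (\<lambda>j. \<gamma>1 j - (if j = q then x + y else 0))"
  have pairing_q: "coroot_pairing n C q \<gamma>1 = x + y"
    using coroot_pairing_shift[OF letters(1), of C q \<gamma> x] cartan
    unfolding \<gamma>1_def y_def by simp
  have pairing_p: "coroot_pairing n C p \<gamma>2 = y"
    using coroot_pairing_shift[OF letters(2), of C p \<gamma>1 "x + y"]
      coroot_pairing_shift[OF letters(1), of C p \<gamma> x] cartan
    unfolding \<gamma>2_def \<gamma>1_def x_def y_def by simp
  have "sref n C p (sref n C q (sref n C p \<gamma>)) = sref n C p (sref n C q \<gamma>1)"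
    unfolding \<gamma>1_def x_def sref_coroot_pairing[of n C p \<gamma>] ..
  also have "\<dots> = sref n C p \<gamma>2"
    unfolding \<gamma>2_def sref_coroot_pairing[of n C q \<gamma>1] pairing_q ..
  also have "\<dots> = (\<lambda>j. \<gamma>2 j - (if j = p then y else 0))"
    unfolding sref_coroot_pairing[of n C p \<gamma>2] pairing_p ..
  finally show ?thesis
    by (auto simp: fun_eq_iff \<gamma>2_def \<gamma>1_def x_def y_def)
qed

lemma sref_simple_root_adjacent:
  "sref n C p (simple_root q) = (\<lambda>j. simple_root p j + simple_root q j)"
  using cartan unfolding sref_coroot_pairing coroot_pairing_simple_root[OF letters(2)]
  by (auto simp: fun_eq_iff simple_root_def)

end

lemma braid_relation:
  assumes "p \<in> {1..n}" "q \<in> {1..n}" "C p p = 2" "C q q = 2" "C p q = -1" "C q p = -1"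
  shows "wprod n C [p, q, p] = wprod n C [q, p, q]"
  using sref_sref_sref[OF assms] sref_sref_sref[OF assms(2,1,4,3,6,5)]
  by (auto simp: fun_eq_iff)

lemma
  assumes "p \<in> {1..n}" "q \<in> {1..n}" "C p p = 2" "C q q = 2" "C p q = -1" "C q p = -1"
  shows sref_simple_root_swap: "sref n C p (simple_root q) = sref n C q (simple_root p)"
    and sref_sref_simple_root: "sref n C p (sref n C q (simple_root p)) = simple_root q"
proof -
  show "sref n C p (simple_root q) = sref n C q (simple_root p)"
    using sref_simple_root_adjacent[OF assms] sref_simple_root_adjacent[OF assms(2,1,4,3,6,5)]
    by (simp add: add.commute)
  show "sref n C p (sref n C q (simple_root p)) = simple_root q"
  proof -
    have "coroot_pairing n C p (\<lambda>j. simple_root q j + simple_root p j) = 1"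
      using coroot_pairing_simple_root[OF assms(1), of C p] coroot_pairing_simple_root[OF assms(2), of C p]
        assms(3,5)
      unfolding coroot_pairing_def by (simp add: distrib_left sum.distrib)
    then show ?thesis
      unfolding sref_simple_root_adjacent[OF assms(2,1,4,3,6,5)] sref_coroot_pairing[of n C p]
      using assms(5,3) by (auto simp: fun_eq_iff simple_root_def)
  qed
qed

lemma exchange_identities:
  fixes Pk Pk1 Pk2 Pm Pr PX PY bk bk1 bk2 :: "'a::field"
  assumes nonzero: "Pk \<noteq> 0" "Pk1 \<noteq> 0" "Pr \<noteq> 0"
    and rel_k: "Pk * Pm = bk * (Pr * PX)"
    and rel_k1: "Pk1 * Pr = bk1 * (Pk * PY)"
    and rel_k2: "Pk2 * Pk = bk2 * (Pk1 * PX)"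
  defines "Pk' \<equiv> bk * (Pk2 * Pr) / (bk1 * Pk)"
  shows "Pk' * Pr = bk2 * (Pm * PY)" and "Pk2 * Pm = bk1 * (Pk' * PX)" and "Pk1 * Pk' = bk * (Pk2 * PY)"
proof -
  have "bk1 \<noteq> 0"
    using rel_k1 nonzero by auto
  have Pm: "Pm = bk * Pr * PX / Pk" and PY: "PY = Pk1 * Pr / (bk1 * Pk)"
    and Pk2: "Pk2 = bk2 * Pk1 * PX / Pk"
    using rel_k rel_k1 rel_k2 nonzero \<open>bk1 \<noteq> 0\<close> by (simp_all add: field_simps)
  show "Pk' * Pr = bk2 * (Pm * PY)" "Pk2 * Pm = bk1 * (Pk' * PX)" "Pk1 * Pk' = bk * (Pk2 * PY)"
    unfolding Pk'_def Pm PY Pk2 using nonzero \<open>bk1 \<noteq> 0\<close> by (simp_all add: field_simps)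
qed

locale braid_words =
  fixes n :: nat and C :: "nat \<Rightarrow> nat \<Rightarrow> int" and u v :: "nat list" and p q :: nat
  assumes letters: "p \<in> {1..n}" "q \<in> {1..n}"
    and adjacent: "C p q = -1" "C q p = -1"
    and diagonal: "\<forall>a\<in>set (u @ p # q # p # v). C a a = 2"
begin

abbreviation "k \<equiv> Suc (length u)"
abbreviation "w \<equiv> u @ p # q # p # v"
abbreviation "w' \<equiv> u @ q # p # q # v"
abbreviation "s \<equiv> transpose (Suc k) (Suc (Suc k))"
abbreviation "nbrs_p \<equiv> {l \<in> last_occurrences u (length u). ent u l \<noteq> q \<and> C (ent u l) p = -1}"
abbreviation "nbrs_q \<equiv> {l \<in> last_occurrences u (length u). ent u l \<noteq> p \<and> C (ent u l) q = -1}"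

text \<open>Interchanging p and q exchanges w and w', so each lemma below about w also yields one about w'.\<close>

lemma swapped: "braid_words n C u v q p"
  using letters adjacent diagonal by unfold_locales auto

lemma diagonal_pq: "C p p = 2" "C q q = 2"
  using diagonal by auto

lemma p_ne_q: "p \<noteq> q"
  using adjacent diagonal_pq by auto

lemma ent_braid:
  "ent w k = p" "ent w (Suc k) = q" "ent w (Suc (Suc k)) = p"
  "ent w' k = q" "ent w' (Suc k) = p" "ent w' (Suc (Suc k)) = q"
  unfolding ent_def by (simp_all add: nth_append)

lemma ent_prefix: "1 \<le> l \<Longrightarrow> l < k \<Longrightarrow> ent w l = ent u l"
  by (rule ent_append_left) auto

lemma ent_outside: "1 \<le> l \<Longrightarrow> l \<notin> {k, Suc k, Suc (Suc k)} \<Longrightarrow> ent w' l = ent w l"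
  unfolding ent_def by (cases "l - 1 < length u") (auto simp: nth_append nth_Cons')

lemma ent_transpose: "1 \<le> l \<Longrightarrow> l \<noteq> k \<Longrightarrow> ent w' (s l) = ent w l"
  using ent_outside[of l] ent_braid by (cases "l \<in> {Suc k, Suc (Suc k)}") auto

lemma diagonal_ent: "1 \<le> j \<Longrightarrow> j \<le> length w \<Longrightarrow> C (ent w j) (ent w j) = 2"
  using diagonal ent_in_set by blast

lemma last_occurrences_prefix: "j < k \<Longrightarrow> last_occurrences w j = last_occurrences u j"
  by (rule last_occurrences_cong) (simp add: ent_prefix)

lemma last_occurrences_prefix_lt: "l \<in> last_occurrences u (length u) \<Longrightarrow> 1 \<le> l \<and> l < k"
  by (auto dest: last_occurrences_le)

lemma k_notin_last_occurrences_prefix: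
  "k \<notin> last_occurrences u (length u)" "Suc k \<notin> last_occurrences u (length u)"
  by (auto dest: last_occurrences_prefix_lt)

lemma ent_last_occurrences_prefix: "l \<in> last_occurrences u (length u) \<Longrightarrow> ent w l = ent u l"
  using last_occurrences_prefix_lt by (simp add: ent_prefix)

lemma last_occurrences_k:
  "last_occurrences w k = insert k {l \<in> last_occurrences u (length u). ent u l \<noteq> p}"
  using ent_last_occurrences_prefix last_occurrences_prefix_lt
  by (auto simp: last_occurrences_Suc last_occurrences_prefix ent_braid)

lemma last_occurrences_Suc_k:
  "last_occurrences w (Suc k) =
     insert (Suc k) (insert k {l \<in> last_occurrences u (length u). ent u l \<noteq> p \<and> ent u l \<noteq> q})"
proof -
  have "last_occurrences w (Suc k) =
      insert (Suc k) {l \<in> insert k {l \<in> last_occurrences u (length u). ent u l \<noteq> p}. ent w l \<noteq> q}"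
    by (subst last_occurrences_Suc) (simp only: last_occurrences_k ent_braid)
  also have "{l \<in> insert k {l \<in> last_occurrences u (length u). ent u l \<noteq> p}. ent w l \<noteq> q} =
      insert k {l \<in> last_occurrences u (length u). ent u l \<noteq> p \<and> ent u l \<noteq> q}"
    using ent_last_occurrences_prefix p_ne_q ent_braid(1) by auto
  finally show ?thesis .
qed

lemma last_occurrences_Suc_Suc_k:
  "last_occurrences w (Suc (Suc k)) =
     insert (Suc (Suc k)) (insert (Suc k) {l \<in> last_occurrences u (length u). ent u l \<noteq> p \<and> ent u l \<noteq> q})"
proof -
  have "last_occurrences w (Suc (Suc k)) = insert (Suc (Suc k))
      {l \<in> insert (Suc k) (insert k {l \<in> last_occurrences u (length u). ent u l \<noteq> p \<and> ent u l \<noteq> q}).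
        ent w l \<noteq> p}"
    by (subst last_occurrences_Suc) (simp only: last_occurrences_Suc_k ent_braid)
  also have "{l \<in> insert (Suc k) (insert k {l \<in> last_occurrences u (length u). ent u l \<noteq> p \<and> ent u l \<noteq> q}).
        ent w l \<noteq> p} = insert (Suc k) {l \<in> last_occurrences u (length u). ent u l \<noteq> p \<and> ent u l \<noteq> q}"
    using ent_last_occurrences_prefix p_ne_q ent_braid(1,2) by auto
  finally show ?thesis .
qed

lemma last_occurrences_braid:
  assumes "j < k \<or> Suc (Suc k) \<le> j"
  shows "last_occurrences w' j = s ` last_occurrences w j" and "k \<notin> last_occurrences w j"
proof -
  have "last_occurrences w' j = s ` last_occurrences w j \<and> k \<notin> last_occurrences w j"
    using assms
  proof
    assume "j < k"
    moreover have "s l = l" "l \<noteq> k" if "l \<in> last_occurrences u j" for l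
      using that \<open>j < k\<close> by (auto dest!: last_occurrences_le)
    ultimately show ?thesis
      using braid_words.last_occurrences_prefix[OF swapped] last_occurrences_prefix
      by force
  next
    assume "Suc (Suc k) \<le> j"
    then show ?thesis
    proof (induction j rule: dec_induct)
      case base
      \<comment> \<open>both prefixes of length k+2 end with the letters p and q\<close>
      let ?L = "{l \<in> last_occurrences u (length u). ent u l \<noteq> p \<and> ent u l \<noteq> q}"
      have "s ` ?L = id ` ?L"
        by (intro image_cong refl) (auto dest!: last_occurrences_prefix_lt)
      moreover have "k \<notin> ?L"
        by (auto dest: last_occurrences_prefix_lt)
      ultimately show ?case
        unfolding last_occurrences_Suc_Suc_k braid_words.last_occurrences_Suc_Suc_k[OF swapped]
        by (simp add: conj_commute insert_commute)
    next
      case (step j)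
      have "s (Suc j) = Suc j" "ent w' (Suc j) = ent w (Suc j)"
        using step.hyps by (auto intro: ent_outside)
      moreover have "ent w' (s l) = ent w l" if "l \<in> last_occurrences w j" for l
        using that step.IH by (auto intro: ent_transpose dest: last_occurrences_le)
      ultimately have "{l \<in> s ` last_occurrences w j. ent w' l \<noteq> ent w' (Suc j)} =
          s ` {l \<in> last_occurrences w j. ent w l \<noteq> ent w (Suc j)}"
        by auto
      then show ?case
        using step.IH step.hyps \<open>s (Suc j) = Suc j\<close> unfolding last_occurrences_Suc by simp
    qed
  qed
  then show "last_occurrences w' j = s ` last_occurrences w j" "k \<notin> last_occurrences w j"
    by auto
qed

lemma bset_eq:
  "1 \<le> j \<Longrightarrow> j \<le> length w \<Longrightarrow> bset C w j = {l \<in> last_occurrences w j. C (ent w l) (ent w j) = -1}"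
  by (rule bset_last_occurrences) (simp_all add: diagonal_ent)

lemma bset_outside:
  assumes "1 \<le> j" "j \<le> length w" "j \<notin> {k, Suc k, Suc (Suc k)}"
  shows "bset C w' j = s ` bset C w j" and "k \<notin> bset C w j"
proof -
  have range: "j < k \<or> Suc (Suc k) \<le> j"
    using assms(3) by auto
  have "ent w' j = ent w j"
    using assms by (intro ent_outside)
  moreover have "ent w' (s l) = ent w l" if "l \<in> last_occurrences w j" for l
    using that last_occurrences_braid(2)[OF range] by (auto intro: ent_transpose dest: last_occurrences_le)
  ultimately show "bset C w' j = s ` bset C w j"
    using assms braid_words.bset_eq[OF swapped, of j]
    unfolding bset_eq[OF assms(1,2)] last_occurrences_braid(1)[OF range] by auto
  show "k \<notin> bset C w j"
    using last_occurrences_braid(2)[OF range] unfolding bset_eq[OF assms(1,2)] by auto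
qed

lemma jminus_outside:
  assumes "1 \<le> j" "j \<notin> {k, Suc k, Suc (Suc k)}"
  shows "jminus w' j = s (jminus w j)" and "jminus w j \<noteq> k"
proof -
  obtain i where j: "j = Suc i"
    using assms(1) by (cases j) auto
  have range: "i < k \<or> Suc (Suc k) \<le> i"
    using assms(2) j by auto
  have "ent w' (Suc i) = ent w (Suc i)"
    using assms j by (intro ent_outside) auto
  moreover have "ent w' (s l) = ent w l" if "l \<in> last_occurrences w i" for l
    using that last_occurrences_braid(2)[OF range] by (auto intro: ent_transpose dest: last_occurrences_le)
  ultimately have "{l \<in> last_occurrences w' i. ent w' l = ent w' (Suc i)} =
      s ` {l \<in> last_occurrences w i. ent w l = ent w (Suc i)}"
    unfolding last_occurrences_braid(1)[OF range] by auto
  then have eq: "(if jminus w' j = 0 then {} else {jminus w' j}) = s ` (if jminus w j = 0 then {} else {jminus w j})"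
    unfolding j jminus_last_occurrences .
  show "jminus w' j = s (jminus w j)"
  proof (cases "jminus w j = 0")
    case True
    then show ?thesis
      using eq by (simp split: if_splits)
  next
    case False
    moreover have "s (jminus w j) \<noteq> 0"
      using False by (simp add: transpose_def)
    ultimately show ?thesis
      using eq by (simp split: if_splits)
  qed
  have "jminus w j \<in> last_occurrences w i" if "jminus w j \<noteq> 0"
    using jminus_in_last_occurrences that unfolding j by blast
  then show "jminus w j \<noteq> k"
    using last_occurrences_braid(2)[OF range] by auto
qed

lemma bset_k:
  "bset C w k = {l \<in> last_occurrences u (length u). ent u l = q} \<union> nbrs_p"
proof -
  have "l \<in> bset C w k \<longleftrightarrow> l \<in> last_occurrences u (length u) \<and> C (ent u l) p = -1" for l
    using diagonal adjacent k_notin_last_occurrences_prefix ent_last_occurrences_prefix[of l]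
    by (cases "l = k") (simp_all add: bset_eq last_occurrences_k ent_braid, auto)
  then show ?thesis
    using adjacent by auto
qed

lemma bset_Suc_k:
  "bset C w (Suc k) = insert k nbrs_q"
proof -
  have "l \<in> bset C w (Suc k) \<longleftrightarrow>
      l = k \<or> l \<in> last_occurrences u (length u) \<and> ent u l \<noteq> p \<and> C (ent u l) q = -1" for l
    using diagonal adjacent k_notin_last_occurrences_prefix ent_last_occurrences_prefix[of l]
    by (cases "l = k"; cases "l = Suc k")
      (simp_all add: bset_eq last_occurrences_Suc_k ent_braid, auto)
  then show ?thesis
    by auto
qed

lemma bset_Suc_Suc_k:
  "bset C w (Suc (Suc k)) = insert (Suc k) nbrs_p"
proof -
  have "l \<in> bset C w (Suc (Suc k)) \<longleftrightarrow>
      l = Suc k \<or> l \<in> last_occurrences u (length u) \<and> ent u l \<noteq> q \<and> C (ent u l) p = -1" for l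
    using diagonal adjacent k_notin_last_occurrences_prefix ent_last_occurrences_prefix[of l]
    by (cases "l = Suc k"; cases "l = Suc (Suc k)")
      (simp_all add: bset_eq last_occurrences_Suc_Suc_k ent_braid, auto)
  then show ?thesis
    by auto
qed

lemma jminus_set_k:
  "{l \<in> last_occurrences w (length u). ent w l = ent w k} = {l \<in> last_occurrences u (length u). ent u l = p}"
  using ent_last_occurrences_prefix unfolding last_occurrences_prefix[of "length u", simplified]
  by (auto simp: ent_braid dest: last_occurrences_prefix_lt)

lemma jminus_set_Suc_k:
  "{l \<in> last_occurrences w k. ent w l = ent w (Suc k)} = {l \<in> last_occurrences u (length u). ent u l = q}"
  using ent_last_occurrences_prefix p_ne_q unfolding last_occurrences_k
  by (auto simp: ent_braid dest: last_occurrences_prefix_lt)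

lemma jminus_Suc_Suc_k: "jminus w (Suc (Suc k)) = k"
proof -
  have "{l \<in> last_occurrences w (Suc k). ent w l = ent w (Suc (Suc k))} = {k}"
    using ent_last_occurrences_prefix p_ne_q unfolding last_occurrences_Suc_k
    by (auto simp: ent_braid dest: last_occurrences_prefix_lt)
  then show ?thesis
    unfolding jminus_last_occurrences by (auto split: if_splits)
qed

lemma jminus_lt_k: "jminus w k < k" "jminus w (Suc k) < k"
proof -
  show "jminus w k < k"
    using jminus_le[of w "length u"] by simp
  have "jminus w (Suc k) \<in> last_occurrences u (length u)" if "jminus w (Suc k) \<noteq> 0"
    using jminus_in_last_occurrences[of w k] that unfolding jminus_set_Suc_k by simp
  then show "jminus w (Suc k) < k"
    by (cases "jminus w (Suc k) = 0") (auto dest: last_occurrences_prefix_lt)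
qed

lemma jminus_braid: "jminus w' k = jminus w (Suc k)" "jminus w' (Suc k) = jminus w k"
  using jminus_eqI[of w' "length u" w k] jminus_eqI[of w' k w "length u"]
  unfolding braid_words.jminus_set_k[OF swapped] braid_words.jminus_set_Suc_k[OF swapped]
    jminus_set_k jminus_set_Suc_k by simp_all

lemma prod_bset_k:
  "f 0 = 1 \<Longrightarrow> (\<Prod>l\<in>bset C w k. f l) = f (jminus w (Suc k)) * (\<Prod>l\<in>nbrs_p. f l)"
  using prod_jminus[of f w k] unfolding bset_k jminus_set_Suc_k by (subst prod.union_disjoint) auto

lemma prod_bset_Suc_k: "(\<Prod>l\<in>bset C w (Suc k). f l) = f k * (\<Prod>l\<in>nbrs_q. f l)"
  unfolding bset_Suc_k using k_notin_last_occurrences_prefix by simp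

lemma prod_bset_Suc_Suc_k: "(\<Prod>l\<in>bset C w (Suc (Suc k)). f l) = f (Suc k) * (\<Prod>l\<in>nbrs_p. f l)"
  unfolding bset_Suc_Suc_k using k_notin_last_occurrences_prefix by simp

lemma jplus_k: "jplus w k = Suc (Suc k)"
  using jplus_eq_Suc_iff[of "Suc k" w k] unfolding last_occurrences_Suc_k ent_braid by simp

lemma inord_k: "inord C w k = {l \<in> last_occurrences w k. ent w l = ent w (Suc k)}"
proof (intro set_eqI iffI)
  fix l assume "l \<in> inord C w k"
  then have "1 \<le> l" "jplus w l = Suc k"
    unfolding inord_def jplus_k by auto
  then show "l \<in> {l \<in> last_occurrences w k. ent w l = ent w (Suc k)}"
    using jplus_eq_Suc_iff[of k w l] by simp
next
  fix l assume l: "l \<in> {l \<in> last_occurrences w k. ent w l = ent w (Suc k)}"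
  then have "1 \<le> l" "l \<le> k" "ent w l = q"
    by (auto simp: ent_braid dest: last_occurrences_le)
  moreover have "l \<noteq> k"
    using \<open>ent w l = q\<close> p_ne_q by (auto simp: ent_braid)
  moreover have "jplus w l = Suc k"
    using l jplus_eq_Suc_iff[of k w l] \<open>1 \<le> l\<close> by simp
  ultimately show "l \<in> inord C w k"
    unfolding inord_def jplus_k using adjacent by (simp add: ent_braid)
qed

lemma beta_k: "beta n C w' k = beta n C w (Suc (Suc k))"
  using sref_sref_simple_root[OF letters diagonal_pq adjacent]
  unfolding beta_def by (simp add: ent_braid wprod_append)

lemma beta_Suc_k: "beta n C w' (Suc k) = beta n C w (Suc k)"
  using sref_simple_root_swap[OF letters diagonal_pq adjacent]
  unfolding beta_def by (simp add: ent_braid wprod_append)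

lemma beta_outside:
  assumes "1 \<le> j" "j \<notin> {k, Suc k, Suc (Suc k)}"
  shows "beta n C w' j = beta n C w j"
proof (cases "j < k")
  case True
  then show ?thesis
    using assms by (simp add: beta_def ent_outside)
next
  case False
  then have "length u + 3 \<le> j - 1"
    using assms(2) by auto
  define m where "m = j - 1 - (length u + 3)"
  have m: "j - 1 = length u + Suc (Suc (Suc m))"
    using \<open>length u + 3 \<le> j - 1\<close> unfolding m_def by simp
  have "take (j - 1) w = u @ [p, q, p] @ take m v" "take (j - 1) w' = u @ [q, p, q] @ take m v"
    unfolding m by (simp_all add: eval_nat_numeral)
  then show ?thesis
    unfolding beta_def ent_outside[OF assms]
    by (simp only: wprod_append braid_relation[OF letters diagonal_pq adjacent])
qed

lemma relation_outside:
  fixes E E' :: "nat \<Rightarrow> 'a::comm_monoid_mult" and \<phi> :: "rvec \<Rightarrow> 'a"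
  assumes j: "1 \<le> j" "j \<le> length w" "j \<notin> {k, Suc k, Suc (Suc k)}"
    and relation: "E j * E (jminus w j) = \<phi> (beta n C w j) * (\<Prod>l\<in>bset C w j. E l)"
    and E'_E: "\<And>l. l \<noteq> k \<Longrightarrow> E' l = E (s l)"
  shows "E' j * E' (jminus w' j) = \<phi> (beta n C w' j) * (\<Prod>l\<in>bset C w' j. E' l)"
proof -
  have E'_s: "E' (s l) = E l" if "l \<noteq> k" for l
    using that E'_E[of "s l"] by (simp add: transpose_def split: if_splits)
  have "(\<Prod>l\<in>bset C w' j. E' l) = (\<Prod>l\<in>bset C w j. E' (s l))"
    unfolding bset_outside(1)[OF j] by (simp add: prod.reindex comp_def)
  also have "\<dots> = (\<Prod>l\<in>bset C w j. E l)"
    using bset_outside(2)[OF j] E'_s by (metis prod.cong)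
  moreover have "E' j = E j"
    using j E'_E[of j] by simp
  moreover have "E' (jminus w' j) = E (jminus w j)"
    using jminus_outside[OF j(1,3)] E'_s by simp
  ultimately show ?thesis
    using relation beta_outside[OF j(1,3)] by simp
qed

text \<open>Here E l stands for the value of P_l at a point, \<phi> evaluates linear forms there, and E' is
  the corresponding P'.\<close>

theorem braid_move_relations:
  fixes E :: "nat \<Rightarrow> 'a::field" and \<phi> :: "rvec \<Rightarrow> 'a"
  assumes E_0: "E 0 = 1" and E_nonzero: "\<And>l. l \<le> length w \<Longrightarrow> E l \<noteq> 0"
    and relations: "\<And>j. 1 \<le> j \<Longrightarrow> j \<le> length w \<Longrightarrow>
      E j * E (jminus w j) = \<phi> (beta n C w j) * (\<Prod>l\<in>bset C w j. E l)"
    and j: "1 \<le> j" "j \<le> length w'"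
  defines "E' \<equiv> \<lambda>l. if l = k
      then \<phi> (beta n C w k) * (E (jplus w k) * (\<Prod>l\<in>inord C w k. E l)) / (\<phi> (beta n C w (Suc k)) * E k)
      else E (s l)"
  shows "E' j * E' (jminus w' j) = \<phi> (beta n C w' j) * (\<Prod>l\<in>bset C w' j. E' l)"
proof -
  define m r where "m = jminus w k" and "r = jminus w (Suc k)"
  have E'_E: "E' l = E (s l)" if "l \<noteq> k" for l
    using that unfolding E'_def by simp
  have E'_prefix: "E' l = E l" if "l < k" for l
    using that E'_E[of l] by simp
  have E'_m: "E' m = E m" and E'_r: "E' r = E r" and E'_0: "E' 0 = 1"
    using E'_prefix jminus_lt_k E_0 unfolding m_def r_def by auto
  have E'_nbrs: "(\<Prod>l\<in>nbrs_p. E' l) = (\<Prod>l\<in>nbrs_p. E l)" "(\<Prod>l\<in>nbrs_q. E' l) = (\<Prod>l\<in>nbrs_q. E l)"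
    using E'_prefix by (auto intro!: prod.cong dest: last_occurrences_prefix_lt)
  have E'_k: "E' k = \<phi> (beta n C w k) * (E (Suc (Suc k)) * E r) / (\<phi> (beta n C w (Suc k)) * E k)"
    unfolding E'_def r_def jplus_k inord_k prod_jminus[of E, OF E_0] by simp
  have "E r \<noteq> 0"
    using jminus_lt_k E_nonzero unfolding r_def by simp
  note identities = exchange_identities[OF E_nonzero E_nonzero \<open>E r \<noteq> 0\<close>
      relations[of k, unfolded prod_bset_k[of E, OF E_0], folded m_def r_def]
      relations[of "Suc k", unfolded prod_bset_Suc_k, folded r_def]
      relations[of "Suc (Suc k)", unfolded prod_bset_Suc_Suc_k jminus_Suc_Suc_k], folded E'_k]
  consider "j \<notin> {k, Suc k, Suc (Suc k)}" | "j = k" | "j = Suc k" | "j = Suc (Suc k)"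
    by blast
  then show ?thesis
  proof cases
    case 1
    then show ?thesis
      using relation_outside[of j E \<phi> E'] j relations E'_E by simp
  next
    case 2
    show ?thesis
      using identities(1) braid_words.prod_bset_k[OF swapped, of E', OF E'_0]
      unfolding 2 jminus_braid beta_k E'_nbrs by (simp flip: m_def r_def add: E'_m E'_r)
  next
    case 3
    show ?thesis
      using identities(2) braid_words.prod_bset_Suc_k[OF swapped, of E'] E'_E[of "Suc k"]
      unfolding 3 jminus_braid beta_Suc_k E'_nbrs by (simp flip: m_def add: E'_m)
  next
    case 4
    show ?thesis
      using identities(3) braid_words.prod_bset_Suc_Suc_k[OF swapped, of E']
        E'_E[of "Suc k"] E'_E[of "Suc (Suc k)"]
      unfolding 4 braid_words.jminus_Suc_Suc_k[OF swapped] braid_words.beta_k[OF swapped, symmetric] E'_nbrs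
      by simp
  qed
qed

end

lemma drop_three:
  "Suc (Suc (Suc i)) \<le> length z \<Longrightarrow> drop i z = z ! i # z ! Suc i # z ! Suc (Suc i) # drop (Suc (Suc (Suc i))) z"
  by (simp add: Cons_nth_drop_Suc)

lemma braid_move_decompose:
  assumes "braid_move C w w' k p q"
  obtains u v where "w = u @ p # q # p # v" "w' = u @ q # p # q # v" "k = Suc (length u)"
proof -
  obtain i where i: "k = Suc i"
    using assms unfolding braid_move_def by (cases k) auto
  have len: "Suc (Suc (Suc i)) \<le> length w" "length w' = length w"
    using assms unfolding braid_move_def i by auto
  have letters: "w ! i = p" "w ! Suc i = q" "w ! Suc (Suc i) = p"
    "w' ! i = q" "w' ! Suc i = p" "w' ! Suc (Suc i) = q"
    using assms unfolding braid_move_def i ent_def by auto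
  have same: "w' ! t = w ! t" if "t < length w" "t \<notin> {i, Suc i, Suc (Suc i)}" for t
    using assms that unfolding braid_move_def i ent_def by (auto dest!: bspec[of _ _ "Suc t"])
  have "take i w' = take i w" "drop (Suc (Suc (Suc i))) w' = drop (Suc (Suc (Suc i))) w"
    using len same by (auto intro!: nth_equalityI)
  then have "w = take i w @ p # q # p # drop (Suc (Suc (Suc i))) w"
    "w' = take i w @ q # p # q # drop (Suc (Suc (Suc i))) w"
    using append_take_drop_id[of i w] append_take_drop_id[of i w'] drop_three[of i w] drop_three[of i w']
      len letters
    by auto
  moreover have "k = Suc (length (take i w))"
    using len i by simp
  ultimately show ?thesis
    using that by blast
qed

lemma braid_words_of_braid_move:
  assumes "simply_laced_simple n C" "reduced_w0 n C (u @ p # q # p # v)"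
    and "braid_move C (u @ p # q # p # v) w' k p q"
  shows "braid_words n C u v p q"
proof
  have letters: "set (u @ p # q # p # v) \<subseteq> {1..n}"
    using assms(2) unfolding reduced_w0_def by auto
  then show "p \<in> {1..n}" "q \<in> {1..n}"
    by auto
  show "C p q = -1"
    using assms(3) unfolding braid_move_def by simp
  with \<open>p \<in> {1..n}\<close> \<open>q \<in> {1..n}\<close> show "C q p = -1"
    using assms(1) unfolding simply_laced_simple_def by metis
  show "\<forall>a\<in>set (u @ p # q # p # v). C a a = 2"
    using assms(1) letters unfolding simply_laced_simple_def by blast
qed

lemma evP_nonzero:
  assumes "propA n C w P" "generic_pt n C a" "l \<le> length w"
  shows "evP n (P l) a \<noteq> 0"
proof (cases "l = 0")
  case False
  then have "set_mset (P l) \<subseteq> pos_roots n C"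
    using assms(1,3) unfolding propA_def by auto
  then show ?thesis
    using assms(2) unfolding generic_pt_def evP_def by auto
qed (use assms(1) in \<open>simp add: propA_def evP_def\<close>)

lemma Pnew_eq:
  assumes "P 0 = {#}" "k \<noteq> 0"
  shows "Pnew n C w P k l a =
    (if l = k then ev n (beta n C w k) a * (evP n (P (jplus w k)) a * (\<Prod>l\<in>inord C w k. evP n (P l) a)) /
        (ev n (beta n C w (Suc k)) a * evP n (P k) a)
     else evP n (P (transpose (Suc k) (Suc (Suc k)) l)) a)"
  using assms unfolding Pnew_def Pin_def transpose_def by (simp add: evP_def)

theorem proposition6p8:
  fixes n :: nat and C :: "nat \<Rightarrow> nat \<Rightarrow> int" and w w' :: "nat list"
    and k p q :: nat and P :: "nat \<Rightarrow> (nat \<Rightarrow> int) multiset"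
  assumes "simply_laced_simple n C"
    and "reduced_w0 n C w" and "reduced_w0 n C w'"
    and "braid_move C w w' k p q"
    and "propA n C w P" and "propB n C w P" and "propC n C w P"
  shows "\<forall>j\<in>{1..length w'}. \<forall>a. generic_pt n C a \<longrightarrow>
           Pnew n C w P k j a * Pnew n C w P k (jminus w' j) a =
           ev n (beta n C w' j) a * (\<Prod>l\<in>bset C w' j. Pnew n C w P k l a)"
proof (intro ballI allI impI)
  fix j a assume j: "j \<in> {1..length w'}" and a: "generic_pt n C a"
  obtain u v where w: "w = u @ p # q # p # v" "w' = u @ q # p # q # v" and k: "k = Suc (length u)"
    using braid_move_decompose[OF assms(4)] .
  interpret braid_words n C u v p q
    using braid_words_of_braid_move assms(1,2,4) unfolding w by blast
  have "k \<noteq> 0"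
    using k by simp
  have P_0: "P 0 = {#}"
    using assms(5) unfolding propA_def by simp
  show "Pnew n C w P k j a * Pnew n C w P k (jminus w' j) a =
      ev n (beta n C w' j) a * (\<Prod>l\<in>bset C w' j. Pnew n C w P k l a)"
    using braid_move_relations[of "\<lambda>l. evP n (P l) a" "\<lambda>\<gamma>. ev n \<gamma> a" j]
      evP_nonzero[OF assms(5) a] assms(6) j P_0
    unfolding Pnew_eq[where P = P, OF P_0 \<open>k \<noteq> 0\<close>] unfolding w k propB_def by (simp add: evP_def)
qed

end
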